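(* Let $\mathsf{inv}(x,y)$ be the formula $(x^2y\approx x)\wedge(xy^2\approx y)$ and, for a prime $p$, let $\exists\mathsf{root}_p(x,y)$ be $\exists z\,(\mathsf{inv}(p,z)\wedge y^p\approx(1-zp)x)$. Then for every prime $p$: (i) $\mathsf{inv}(x,y)$ defines a unary pp definable extendable implicit operation $g$ of $\mathsf{RCR}$ such that for every weakly rooted field $\mathbf A$, $g^{\mathbf A}$ is total and $g^{\mathbf A}(a)=a^*$ for all $a\in A$; (ii) $\exists\mathsf{root}_p(x,y)$ defines a unary pp definable extendable implicit operation $f_p$ of $\mathsf{RCR}$ such that for every weakly rooted field $\mathbf A$, $f_p^{\mathbf A}$ is total and $f_p^{\mathbf A}(a)=r_p(a)$ for all $a\in A$.
   Context: Rings are unital in the language $\{+,\cdot,-,0,1\}$; $p$ in a term denotes $1+\dots+1$ ($p$ times). $\mathsf{RCR}$ is the quasivariety of reduced commutative rings. A field is weakly rooted if it has characteristic $0$, or prime characteristic $p$ with every element having a $p$-th root. Weak inverse: $a^*=a^{-1}$ if $a\ne0$, $0^*=0$; weak $p$-root: $r_p(a)=\sqrt[p]{a}$ if the characteristic is $p$, else $0$. For a quasivariety $\mathsf K$, an $n$-ary operation of $\mathsf K$ is a family $f=\langle f^{\mathbf A}:\mathbf A\in\mathsf K\rangle$ of partial $n$-ary functions preserved by all homomorphisms between members of $\mathsf K$ (tuples in the domain are mapped into the domain and $f$ commutes with the homomorphism). It is implicit and defined by a formula $\varphi(\vec x,y)$ if for all $\mathbf A\in\mathsf K$, $\mathbf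 A\models\varphi(\vec a,b)$ iff $\vec a\in\mathrm{dom}(f^{\mathbf A})$ and $f^{\mathbf A}(\vec a)=b$; pp definable if $\varphi$ is primitive positive. It is extendable if for every $\mathbf A\in\mathsf K$ and $\vec a\in \mathrm{dom}(f^{\mathbf A})$ there is $\mathbf B\in\mathsf K$ with $\mathbf A\le\mathbf B$ and $\vec a\in\mathrm{dom}(f^{\mathbf B})$. *)

theory Defs
  imports "HOL-Computational_Algebra.Primes" "HOL-Algebra.Ring" "HOL-Algebra.RingHom"
begin

definition numc :: "'a ring \<Rightarrow> nat \<Rightarrow> 'a" where
  "numc R p = add_pow R p \<one>\<^bsub>R\<^esub>"

definition reduced_cring :: "'a ring \<Rightarrow> bool" where
  "reduced_cring R \<longleftrightarrow> cring R \<and>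
     (\<forall>x\<in>carrier R. \<forall>n::nat. x [^]\<^bsub>R\<^esub> n = \<zero>\<^bsub>R\<^esub> \<longrightarrow> x = \<zero>\<^bsub>R\<^esub>)"

definition inv_rel :: "'a ring \<Rightarrow> 'a \<Rightarrow> 'a \<Rightarrow> bool" where
  "inv_rel R x y \<longleftrightarrow>
     (x \<otimes>\<^bsub>R\<^esub> x) \<otimes>\<^bsub>R\<^esub> y = x \<and> x \<otimes>\<^bsub>R\<^esub> (y \<otimes>\<^bsub>R\<^esub> y) = y"

definition root_rel :: "nat \<Rightarrow> 'a ring \<Rightarrow> 'a \<Rightarrow> 'a \<Rightarrow> bool" where
  "root_rel p R x y \<longleftrightarrow>
     (\<exists>z\<in>carrier R. inv_rel R (numc R p) z \<and>
        y [^]\<^bsub>R\<^esub> p = (\<one>\<^bsub>R\<^esub> \<ominus>\<^bsub>R\<^esub> z \<otimes>\<^bsub>R\<^esub> numc R p) \<otimes>\<^bsub>R\<^esub> x)"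

definition functional_in_RCR :: "('a ring \<Rightarrow> 'a \<Rightarrow> 'a \<Rightarrow> bool) \<Rightarrow> bool" where
  "functional_in_RCR \<phi> \<longleftrightarrow>
     (\<forall>A. reduced_cring A \<longrightarrow>
        (\<forall>x\<in>carrier A. \<forall>y1\<in>carrier A. \<forall>y2\<in>carrier A.
            \<phi> A x y1 \<longrightarrow> \<phi> A x y2 \<longrightarrow> y1 = y2))"

(* Preservation by all homomorphisms between members of RCR
   (phiA, phiB are the same formula interpreted at the two carrier types) *)
definition preserved_by_homs :: "('a ring \<Rightarrow> 'a \<Rightarrow> 'a \<Rightarrow> bool) \<Rightarrow> ('b ring \<Rightarrow> 'b \<Rightarrow> 'b \<Rightarrow> bool) \<Rightarrow> bool" where
  "preserved_by_homs \<phi>A \<phi>B \<longleftrightarrow>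
     (\<forall>A B h. reduced_cring A \<longrightarrow> reduced_cring B \<longrightarrow> h \<in> ring_hom A B \<longrightarrow>
        (\<forall>x\<in>carrier A. \<forall>y\<in>carrier A. \<phi>A A x y \<longrightarrow> \<phi>B B (h x) (h y)))"

(* B is taken on the type ('a set => 'a list), which is large enough to carry the
   standard extensions (subrings of products over prime ideals of A of fields of
   cardinality at most max(|A|, aleph_0)). *)
definition extendable_RCR :: "(('a set \<Rightarrow> 'a list) ring \<Rightarrow> ('a set \<Rightarrow> 'a list) \<Rightarrow> ('a set \<Rightarrow> 'a list) \<Rightarrow> bool) \<Rightarrow> bool" where
  "extendable_RCR \<phi>B \<longleftrightarrow>
     (\<forall>A :: 'a ring. reduced_cring A \<longrightarrow>
        (\<forall>x\<in>carrier A. \<exists>B h. reduced_cring B \<and> h \<in> ring_hom A B \<and> inj_on h (carrier A) \<and>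
            (\<exists>y\<in>carrier B. \<phi>B B (h x) y)))"

definition char_zero :: "'a ring \<Rightarrow> bool" where
  "char_zero R \<longleftrightarrow> (\<forall>n::nat. n > 0 \<longrightarrow> numc R n \<noteq> \<zero>\<^bsub>R\<^esub>)"

definition weakly_rooted_field :: "'a ring \<Rightarrow> bool" where
  "weakly_rooted_field R \<longleftrightarrow> field R \<and>
     (char_zero R \<or>
      (\<exists>q::nat. prime q \<and> numc R q = \<zero>\<^bsub>R\<^esub> \<and>
         (\<forall>a\<in>carrier R. \<exists>b\<in>carrier R. b [^]\<^bsub>R\<^esub> q = a)))"

definition weak_inv :: "'a ring \<Rightarrow> 'a \<Rightarrow> 'a" where
  "weak_inv R a = (if a = \<zero>\<^bsub>R\<^esub> then \<zero>\<^bsub>R\<^esub> else inv\<^bsub>R\<^esub> a)"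

definition weak_root :: "nat \<Rightarrow> 'a ring \<Rightarrow> 'a \<Rightarrow> 'a" where
  "weak_root p R a = (if numc R p = \<zero>\<^bsub>R\<^esub>
      then (THE b. b \<in> carrier R \<and> b [^]\<^bsub>R\<^esub> p = a) else \<zero>\<^bsub>R\<^esub>)"

end

theory Submission
  imports Defs "HOL-Algebra.Chinese_Remainder"
begin

text \<open>
  In a commutative ring, \<open>inv(x, y)\<close> determines \<open>y\<close>: both \<open>x y\<^sub>1\<close> and \<open>x y\<^sub>2\<close> are idempotents
  absorbing each other. A witness \<open>z\<close> of \<open>\<exists>root\<^sub>p(x, y)\<close> makes \<open>e = z p\<close> an idempotent with
  \<open>p e = p\<close>; in a reduced ring this forces \<open>p y = 0\<close>, and on such elements the Frobenius map is
  injective, so \<open>y\<close> is unique. Both formulas are primitive positive, hence preserved by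
  homomorphisms, and on weakly rooted fields they define \<open>a\<^sup>*\<close> and \<open>r\<^sub>p(a)\<close>.

  For extendability, a reduced ring \<open>A\<close> with an element \<open>s\<close> embeds into the reduced ring
  \<open>A[1/s] \<times> A / Ann(Ann s)\<close>: an element \<open>a\<close> of the kernel satisfies \<open>s a = 0\<close> and
  \<open>a \<in> Ann(Ann s)\<close>, so \<open>a\<^sup>2 = 0\<close>. The image of \<open>s\<close> is \<open>(s, 0)\<close>, with weak inverse \<open>(1/s, 0)\<close>.
  For \<open>s = p\<close> the second factor has characteristic \<open>p\<close>, and composing its projection with the
  Frobenius endomorphism gives an embedding \<open>a \<mapsto> (a, [a]\<^sup>p)\<close> under which \<open>x\<close> has the
  \<open>p\<close>-th root \<open>(0, [x])\<close>.
\<close>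

text \<open>\<^const>\<open>numc\<close>, \<^const>\<open>inv_rel\<close> and \<^const>\<open>root_rel\<close> live on \<open>'a ring\<close>, not on ring
  schemes, so their theory is developed in these type-restricted copies of \<open>cring\<close> and \<open>field\<close>.\<close>

locale record_cring = cring R for R :: "'a ring" (structure)

locale record_field = field R for R :: "'a ring" (structure)

sublocale record_field \<subseteq> record_cring ..

lemma (in record_cring) numc_closed [simp]: "numc R n \<in> carrier R"
  by (simp add: numc_def)

lemma (in record_cring) numc_0 [simp]: "numc R 0 = \<zero>"
  by (simp add: numc_def)

lemma (in record_cring) numc_Suc: "numc R (Suc n) = numc R n \<oplus> \<one>"
  by (simp add: numc_def)

lemma (in record_cring) numc_add: "numc R (m + n) = numc R m \<oplus> numc R n"
  by (simp add: numc_def add.nat_pow_mult)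

lemma (in record_cring) numc_mult: "numc R (m * n) = numc R m \<otimes> numc R n"
  by (induct n) (simp_all add: numc_Suc numc_add r_distr a_comm)

lemma hom_numc:
  fixes R :: "'a ring" and S :: "'b ring"
  assumes "ring_hom_ring R S h"
  shows "h (numc R n) = numc S n"
proof -
  interpret ring_hom_ring R S h by fact
  show ?thesis by (induct n) (simp_all add: numc_def)
qed

section \<open>Binomial theorem and Frobenius map\<close>

lemma (in cring) finsum_add_pow_mult:
  fixes c :: "'i \<Rightarrow> nat"
  assumes "x \<in> A \<rightarrow> carrier R" and "y \<in> carrier R" and "finite A"
  shows "(\<Oplus>k\<in>A. add_pow R (c k) (x k)) \<otimes> y = (\<Oplus>k\<in>A. add_pow R (c k) (x k \<otimes> y))"
proof -
  have "(\<Oplus>k\<in>A. add_pow R (c k) (x k)) \<otimes> y = (\<Oplus>k\<in>A. add_pow R (c k) (x k) \<otimes> y)"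
    using assms by (intro finsum_ldistr) auto
  also have "\<dots> = (\<Oplus>k\<in>A. add_pow R (c k) (x k \<otimes> y))"
    using assms by (intro finsum_cong') (auto intro!: add_pow_ldistr)
  finally show ?thesis .
qed

lemma (in cring) binomial_ring:
  assumes a: "a \<in> carrier R" and b: "b \<in> carrier R"
  shows "(a \<oplus> b) [^] n = (\<Oplus>k\<in>{..n}. add_pow R (n choose k) (a [^] k \<otimes> b [^] (n - k)))"
proof (induct n)
  case 0
  then show ?case using a b by simp
next
  case (Suc n)
  let ?S = "\<Oplus>k\<in>{..n}. add_pow R (n choose k) (a [^] k \<otimes> b [^] (n - k))"
  let ?T1 = "\<Oplus>k\<in>{..n}. add_pow R (n choose k) (a [^] Suc k \<otimes> b [^] (n - k))"
  let ?T2 = "\<Oplus>k\<in>{..n}. add_pow R (n choose Suc k) (a [^] Suc k \<otimes> b [^] (n - k))"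
  have "?S \<otimes> a = (\<Oplus>k\<in>{..n}. add_pow R (n choose k) (a [^] k \<otimes> b [^] (n - k) \<otimes> a))"
    using a b by (intro finsum_add_pow_mult) auto
  also have "\<dots> = ?T1"
    using a b by (intro finsum_cong') (simp_all add: m_assoc m_comm[of _ a])
  finally have S_a: "?S \<otimes> a = ?T1" .
  have "?S \<otimes> b = (\<Oplus>k\<in>{..n}. add_pow R (n choose k) (a [^] k \<otimes> b [^] (Suc n - k)))"
    using a b
    by (subst finsum_add_pow_mult) (auto intro!: finsum_cong' simp: m_assoc Suc_diff_le)
  also have "\<dots> = (\<Oplus>k\<in>{..Suc n}. add_pow R (n choose k) (a [^] k \<otimes> b [^] (Suc n - k)))"
    using a b by (subst finsum_Suc) (simp_all add: binomial_eq_0)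
  also have "\<dots> = ?T2 \<oplus> b [^] Suc n"
    using a b by (subst finsum_Suc2) auto
  finally have S_b: "?S \<otimes> b = ?T2 \<oplus> b [^] Suc n" .
  have pascal: "?T1 \<oplus> ?T2 = (\<Oplus>k\<in>{..n}. add_pow R (Suc n choose Suc k) (a [^] Suc k \<otimes> b [^] (n - k)))"
  proof -
    have "?T1 \<oplus> ?T2 = (\<Oplus>k\<in>{..n}. add_pow R (n choose k) (a [^] Suc k \<otimes> b [^] (n - k))
        \<oplus> add_pow R (n choose Suc k) (a [^] Suc k \<otimes> b [^] (n - k)))"
      using a b by (intro finsum_addf[symmetric]) auto
    also have "\<dots> = (\<Oplus>k\<in>{..n}. add_pow R (Suc n choose Suc k) (a [^] Suc k \<otimes> b [^] (n - k)))"
      using a b by (intro finsum_cong') (auto simp: add.nat_pow_mult)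
    finally show ?thesis .
  qed
  have "(a \<oplus> b) [^] Suc n = ?S \<otimes> a \<oplus> ?S \<otimes> b"
    using Suc a b by (simp add: r_distr)
  also have "\<dots> = (?T1 \<oplus> ?T2) \<oplus> b [^] Suc n"
    using a b by (simp add: S_a S_b a_assoc)
  also have "\<dots> = (\<Oplus>k\<in>{..Suc n}. add_pow R (Suc n choose k) (a [^] k \<otimes> b [^] (Suc n - k)))"
    unfolding pascal using a b by (subst finsum_Suc2) auto
  finally show ?case .
qed

lemma (in record_cring) freshman_dream:
  assumes p: "prime p" and a: "a \<in> carrier R" and b: "b \<in> carrier R"
    and pa: "numc R p \<otimes> a = \<zero>"
  shows "(a \<oplus> b) [^] p = a [^] p \<oplus> b [^] p"
proof -
  define f where "f k = add_pow R (p choose k) (a [^] k \<otimes> b [^] (p - k))" for k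
  obtain m where pm: "p = Suc (Suc m)"
    using prime_ge_2_nat[OF p] by (metis add_2_eq_Suc le_Suc_ex)
  have f_closed: "f \<in> UNIV \<rightarrow> carrier R"
    unfolding f_def using a b by auto
  have f_middle: "f (Suc k) = \<zero>" if "k \<le> m" for k
  proof -
    have "p dvd p choose Suc k"
      using that pm p by (intro dvd_choose_prime) auto
    then obtain c where c: "p choose Suc k = p * c" ..
    let ?t = "a [^] Suc k \<otimes> b [^] (p - Suc k)"
    have "add_pow R p ?t = numc R p \<otimes> ?t"
      unfolding numc_def using a b by (simp add: add_pow_ldistr)
    also have "\<dots> = (numc R p \<otimes> a) \<otimes> (a [^] k \<otimes> b [^] (p - Suc k))"
      using a b by (simp add: m_ac)
    finally have "add_pow R p ?t = \<zero>"
      using pa a b by simp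
    then show ?thesis
      unfolding f_def c using a b add.nat_pow_pow[of ?t c p] by simp
  qed
  have "(a \<oplus> b) [^] p = (\<Oplus>k\<in>{..Suc (Suc m)}. f k)"
    unfolding f_def pm[symmetric] by (rule binomial_ring[OF a b])
  also have "\<dots> = f (Suc (Suc m)) \<oplus> (\<Oplus>k\<in>{..Suc m}. f k)"
    using f_closed by (intro finsum_Suc) auto
  also have "(\<Oplus>k\<in>{..Suc m}. f k) = (\<Oplus>k\<in>{..m}. f (Suc k)) \<oplus> f 0"
    using f_closed by (intro finsum_Suc2) auto
  also have "(\<Oplus>k\<in>{..m}. f (Suc k)) = (\<Oplus>k\<in>{..m}. \<zero>)"
    using f_middle by (intro finsum_cong') auto
  finally show ?thesis
    unfolding f_def using a b pm by simp
qed

lemma (in record_cring) frobenius_hom: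
  assumes p: "prime p" and char: "numc R p = \<zero>"
  shows "(\<lambda>x. x [^] p) \<in> ring_hom R R"
proof (rule ring_hom_memI)
  fix x y
  assume x: "x \<in> carrier R" and y: "y \<in> carrier R"
  show "(x \<otimes> y) [^] p = x [^] p \<otimes> y [^] p"
    using x y by (simp add: nat_pow_distrib)
  show "(x \<oplus> y) [^] p = x [^] p \<oplus> y [^] p"
    using freshman_dream[OF p x y] char x by simp
qed simp_all

section \<open>The formulas inv and root\<close>

lemma (in record_cring) inv_rel_unique:
  assumes x: "x \<in> carrier R" and y1: "y1 \<in> carrier R" and y2: "y2 \<in> carrier R"
    and inv1: "inv_rel R x y1" and inv2: "inv_rel R x y2"
  shows "y1 = y2"
proof -
  have a1: "x \<otimes> x \<otimes> y1 = x" and b1: "x \<otimes> (y1 \<otimes> y1) = y1"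
    using inv1 by (auto simp: inv_rel_def)
  have a2: "x \<otimes> x \<otimes> y2 = x" and b2: "x \<otimes> (y2 \<otimes> y2) = y2"
    using inv2 by (auto simp: inv_rel_def)
  have "x \<otimes> y1 = (x \<otimes> x \<otimes> y2) \<otimes> y1"
    using a2 by simp
  also have "\<dots> = (x \<otimes> x \<otimes> y1) \<otimes> y2"
    using x y1 y2 by algebra
  also have "\<dots> = x \<otimes> y2"
    using a1 by simp
  finally have xy: "x \<otimes> y1 = x \<otimes> y2" .
  have "y1 = (x \<otimes> y1) \<otimes> y1"
    using b1 x y1 by (simp add: m_assoc)
  also have "\<dots> = (x \<otimes> y2) \<otimes> y1"
    using xy by simp
  also have "\<dots> = y2 \<otimes> (x \<otimes> y1)"
    using x y1 y2 by algebra
  also have "\<dots> = y2 \<otimes> (x \<otimes> y2)"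
    using xy by simp
  also have "\<dots> = y2"
    using b2 x y2 by algebra
  finally show ?thesis .
qed

lemma (in record_cring) inv_rel_Units:
  assumes "x \<in> Units R"
  shows "inv_rel R x (inv x)"
proof -
  have x: "x \<in> carrier R" "inv x \<in> carrier R"
    using assms by auto
  have "x \<otimes> x \<otimes> inv x = x \<otimes> (x \<otimes> inv x)" and "x \<otimes> (inv x \<otimes> inv x) = (x \<otimes> inv x) \<otimes> inv x"
    using x by (simp_all add: m_assoc)
  then show ?thesis
    using assms x by (simp add: inv_rel_def)
qed

lemma (in record_cring) inv_rel_zero_iff:
  assumes "y \<in> carrier R"
  shows "inv_rel R \<zero> y \<longleftrightarrow> y = \<zero>"
  using assms by (auto simp: inv_rel_def)

lemma inv_rel_hom:
  fixes R :: "'a ring" and S :: "'b ring"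
  assumes "ring_hom_ring R S h" and "x \<in> carrier R" and "y \<in> carrier R" and "inv_rel R x y"
  shows "inv_rel S (h x) (h y)"
proof -
  interpret ring_hom_ring R S h by fact
  show ?thesis
    using assms(2-4) by (simp add: inv_rel_def flip: hom_mult)
qed

lemma (in record_field) inv_rel_iff_weak_inv:
  assumes a: "a \<in> carrier R" and b: "b \<in> carrier R"
  shows "inv_rel R a b \<longleftrightarrow> b = weak_inv R a"
proof (cases "a = \<zero>")
  case True
  then show ?thesis
    using b by (simp add: inv_rel_zero_iff weak_inv_def)
next
  case False
  then have "a \<in> Units R"
    using a field_Units by auto
  then show ?thesis
    using False inv_rel_unique[OF a b _ _ inv_rel_Units] inv_rel_Units
    by (auto simp: weak_inv_def)
qed

locale reduced = record_cring +
  assumes nilpotent_imp_zero: "\<lbrakk> x \<in> carrier R; x [^] (n::nat) = \<zero> \<rbrakk> \<Longrightarrow> x = \<zero>"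

lemma reduced_cring_iff_reduced: "reduced_cring R \<longleftrightarrow> reduced R"
  unfolding reduced_cring_def reduced_def reduced_axioms_def record_cring_def by blast

lemma (in reduced) square_eq_zero_imp_zero:
  assumes "x \<in> carrier R" and "x \<otimes> x = \<zero>"
  shows "x = \<zero>"
  using assms nilpotent_imp_zero[of x 2] by (simp add: numeral_2_eq_2)

lemma (in reduced) pow_mult_eq_zero_imp_mult_eq_zero:
  assumes a: "a \<in> carrier R" and t: "t \<in> carrier R" and "a [^] (k::nat) \<otimes> t = \<zero>"
  shows "a \<otimes> t = \<zero>"
proof -
  have "(a \<otimes> t) [^] Suc k = (a [^] k \<otimes> t) \<otimes> (a \<otimes> t [^] k)"
    using a t by (simp add: nat_pow_distrib m_ac)
  also have "\<dots> = \<zero>"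
    using assms by simp
  finally show ?thesis
    using a t nilpotent_imp_zero by blast
qed

sublocale record_field \<subseteq> reduced
proof
  fix x and n :: nat
  assume "x \<in> carrier R" and "x [^] n = \<zero>"
  then show "x = \<zero>"
    by (induct n) (auto simp: integral_iff)
qed

lemma (in monoid) idempotent_pow_Suc:
  assumes "e \<in> carrier G" and "e \<otimes> e = e"
  shows "e [^] Suc n = e"
  using assms by (induct n) (simp_all add: nat_pow_Suc2 m_assoc[symmetric])

lemma (in reduced) root_rel_imp_numc_mult_eq_zero:
  assumes p: "p > 0" and x: "x \<in> carrier R" and y: "y \<in> carrier R" and "root_rel p R x y"
  shows "numc R p \<otimes> y = \<zero>"
proof -
  obtain z where z: "z \<in> carrier R" and inv: "inv_rel R (numc R p) z"
    and y_pow: "y [^] p = (\<one> \<ominus> z \<otimes> numc R p) \<otimes> x"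
    using assms(4) unfolding root_rel_def by blast
  define e where "e = z \<otimes> numc R p"
  have e: "e \<in> carrier R"
    unfolding e_def using z by simp
  have "numc R p \<otimes> numc R p \<otimes> z = numc R p"
    using inv by (simp add: inv_rel_def)
  then have e_idem: "e \<otimes> e = e" and numc_e: "numc R p \<otimes> e = numc R p"
    unfolding e_def using z by (simp_all add: m_ac)
  have "e [^] p = e"
    using idempotent_pow_Suc[OF e e_idem, of "p - 1"] p by simp
  then have "(e \<otimes> y) [^] p = e \<otimes> ((\<one> \<ominus> e) \<otimes> x)"
    using e y by (simp add: nat_pow_distrib y_pow e_def)
  also have "\<dots> = (e \<ominus> e \<otimes> e) \<otimes> x"
    using e x by algebra
  also have "\<dots> = \<zero>"
    using e x by (simp add: e_idem minus_eq r_neg)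
  finally have "e \<otimes> y = \<zero>"
    using e y nilpotent_imp_zero by blast
  moreover have "numc R p \<otimes> y = numc R p \<otimes> (e \<otimes> y)"
    using e y numc_e by (simp add: m_assoc[symmetric])
  ultimately show ?thesis
    by simp
qed

lemma (in reduced) pow_prime_eq_imp_eq:
  assumes p: "prime p" and y1: "y1 \<in> carrier R" and y2: "y2 \<in> carrier R"
    and p_y1: "numc R p \<otimes> y1 = \<zero>" and p_y2: "numc R p \<otimes> y2 = \<zero>"
    and eq: "y1 [^] p = y2 [^] p"
  shows "y1 = y2"
proof -
  define u where "u = y1 \<ominus> y2"
  have u: "u \<in> carrier R" and u_y2: "u \<oplus> y2 = y1"
    unfolding u_def using y1 y2 by (simp, algebra)
  have "numc R p \<otimes> u = numc R p \<otimes> y1 \<ominus> numc R p \<otimes> y2"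
    unfolding u_def using y1 y2 numc_closed by algebra
  then have "numc R p \<otimes> u = \<zero>"
    using p_y1 p_y2 by (simp add: minus_eq)
  then have "y1 [^] p = u [^] p \<oplus> y2 [^] p"
    using freshman_dream[OF p u y2] u_y2 by simp
  then have "u [^] p = \<zero>"
    using eq u y2 by (metis add.r_cancel_one' nat_pow_closed)
  then have "u = \<zero>"
    using u nilpotent_imp_zero by blast
  then show ?thesis
    using u_y2 y2 by simp
qed

lemma (in reduced) root_rel_unique:
  assumes p: "prime p" and x: "x \<in> carrier R" and y1: "y1 \<in> carrier R" and y2: "y2 \<in> carrier R"
    and root1: "root_rel p R x y1" and root2: "root_rel p R x y2"
  shows "y1 = y2"
proof -
  obtain z1 where z1: "z1 \<in> carrier R" "inv_rel R (numc R p) z1"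
    and y1_pow: "y1 [^] p = (\<one> \<ominus> z1 \<otimes> numc R p) \<otimes> x"
    using root1 unfolding root_rel_def by blast
  obtain z2 where z2: "z2 \<in> carrier R" "inv_rel R (numc R p) z2"
    and y2_pow: "y2 [^] p = (\<one> \<ominus> z2 \<otimes> numc R p) \<otimes> x"
    using root2 unfolding root_rel_def by blast
  have "z1 = z2"
    using inv_rel_unique[OF numc_closed z1(1) z2(1) z1(2) z2(2)] .
  then have "y1 [^] p = y2 [^] p"
    using y1_pow y2_pow by simp
  moreover have "numc R p \<otimes> y1 = \<zero>" and "numc R p \<otimes> y2 = \<zero>"
    using root_rel_imp_numc_mult_eq_zero[OF prime_gt_0_nat[OF p] x] y1 y2 root1 root2 by simp_all
  ultimately show ?thesis
    using pow_prime_eq_imp_eq[OF p y1 y2] by blast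
qed

lemma root_rel_hom:
  fixes R :: "'a ring" and S :: "'b ring"
  assumes hom: "ring_hom_ring R S h" and x: "x \<in> carrier R" and y: "y \<in> carrier R"
    and root: "root_rel p R x y"
  shows "root_rel p S (h x) (h y)"
proof -
  interpret ring_hom_ring R S h by fact
  obtain z where z: "z \<in> carrier R" and inv: "inv_rel R (numc R p) z"
    and y_pow: "y [^]\<^bsub>R\<^esub> p = (\<one>\<^bsub>R\<^esub> \<ominus>\<^bsub>R\<^esub> z \<otimes>\<^bsub>R\<^esub> numc R p) \<otimes>\<^bsub>R\<^esub> x"
    using root unfolding root_rel_def by blast
  have "inv_rel S (numc S p) (h z)"
    using inv_rel_hom[OF hom _ z inv] hom_numc[OF hom] by (simp add: numc_def)
  moreover have "h y [^]\<^bsub>S\<^esub> p = (\<one>\<^bsub>S\<^esub> \<ominus>\<^bsub>S\<^esub> h z \<otimes>\<^bsub>S\<^esub> numc S p) \<otimes>\<^bsub>S\<^esub> h x"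
    using y_pow x y z hom_numc[OF hom, of p]
    by (simp add: numc_def R.minus_eq S.minus_eq flip: hom_nat_pow)
  ultimately show ?thesis
    unfolding root_rel_def using ring_hom_closed[OF homh z] by blast
qed

lemma (in record_cring) root_rel_iff_pow_eq:
  assumes char: "numc R p = \<zero>" and a: "a \<in> carrier R" and b: "b \<in> carrier R"
  shows "root_rel p R a b \<longleftrightarrow> b [^] p = a"
  unfolding root_rel_def char using a by (auto simp: inv_rel_zero_iff minus_eq)

lemma (in record_cring) root_rel_iff_pow_eq_zero:
  assumes unit: "numc R p \<in> Units R" and a: "a \<in> carrier R" and b: "b \<in> carrier R"
  shows "root_rel p R a b \<longleftrightarrow> b [^] p = \<zero>"
proof -
  have "inv_rel R (numc R p) z \<longleftrightarrow> z = inv (numc R p)" if "z \<in> carrier R" for z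
    using inv_rel_unique[OF numc_closed that _ _ inv_rel_Units[OF unit]] inv_rel_Units[OF unit]
      Units_inv_closed[OF unit] by auto
  moreover have "(\<one> \<ominus> inv (numc R p) \<otimes> numc R p) \<otimes> a = \<zero>"
    using unit a by (simp add: minus_eq r_neg)
  ultimately show ?thesis
    unfolding root_rel_def using unit by auto
qed

lemma (in record_field) prime_char_unique:
  assumes p: "prime p" and q: "prime q" and char_p: "numc R p = \<zero>" and char_q: "numc R q = \<zero>"
  shows "p = q"
proof (rule ccontr)
  assume "p \<noteq> q"
  then have "coprime p q"
    using p q by (simp add: primes_coprime)
  then obtain x y where "p * x = q * y + 1"
    using bezout_nat[of p q] p by (auto simp: prime_gt_0_nat)
  then have "numc R (p * x) = numc R (q * y) \<oplus> \<one>"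
    by (simp add: numc_Suc)
  then show False
    using char_p char_q by (simp add: numc_mult)
qed

lemma (in record_field) weak_root_pow:
  assumes rooted: "weakly_rooted_field R" and p: "prime p" and char: "numc R p = \<zero>"
    and a: "a \<in> carrier R"
  shows "weak_root p R a \<in> carrier R \<and> weak_root p R a [^] p = a"
proof -
  have "\<not> char_zero R"
    using char prime_gt_0_nat[OF p] unfolding char_zero_def by blast
  then obtain q where q: "prime q" "numc R q = \<zero>"
    and roots: "\<forall>a\<in>carrier R. \<exists>c\<in>carrier R. c [^] q = a"
    using rooted unfolding weakly_rooted_field_def by blast
  have "p = q"
    using prime_char_unique[OF p q(1) char q(2)] .
  then obtain c where c: "c \<in> carrier R" "c [^] p = a"
    using roots a by blast
  have "c' = c" if "c' \<in> carrier R" "c' [^] p = a" for c'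
    using pow_prime_eq_imp_eq[OF p that(1) c(1)] that c char by simp
  then have "(THE c. c \<in> carrier R \<and> c [^] p = a) = c"
    using c by (intro the_equality) blast+
  then show ?thesis
    using c char by (simp add: weak_root_def)
qed

lemma (in record_field) root_rel_iff_weak_root:
  assumes rooted: "weakly_rooted_field R" and p: "prime p"
    and a: "a \<in> carrier R" and b: "b \<in> carrier R"
  shows "root_rel p R a b \<longleftrightarrow> b = weak_root p R a"
proof (cases "numc R p = \<zero>")
  case False
  then have "numc R p \<in> Units R"
    using field_Units by simp
  then have "root_rel p R a b \<longleftrightarrow> b [^] p = \<zero>"
    using root_rel_iff_pow_eq_zero a b by blast
  also have "\<dots> \<longleftrightarrow> b = \<zero>"
    using b prime_gt_0_nat[OF p] nilpotent_imp_zero by (auto simp: nat_pow_zero)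
  finally show ?thesis
    using False by (simp add: weak_root_def)
next
  case True
  have root: "weak_root p R a \<in> carrier R" "weak_root p R a [^] p = a"
    using weak_root_pow[OF rooted p True a] by simp_all
  have "root_rel p R a b \<longleftrightarrow> b [^] p = weak_root p R a [^] p"
    using root_rel_iff_pow_eq[OF True a b] root(2) by simp
  also have "\<dots> \<longleftrightarrow> b = weak_root p R a"
    using pow_prime_eq_imp_eq[OF p b root(1)] b root(1) True by auto
  finally show ?thesis .
qed

section \<open>Direct products and isomorphic copies of reduced rings\<close>

lemma RDirProd_one: "\<one>\<^bsub>RDirProd R S\<^esub> = (\<one>\<^bsub>R\<^esub>, \<one>\<^bsub>S\<^esub>)"
  and RDirProd_zero: "\<zero>\<^bsub>RDirProd R S\<^esub> = (\<zero>\<^bsub>R\<^esub>, \<zero>\<^bsub>S\<^esub>)"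
  and RDirProd_mult: "(a, b) \<otimes>\<^bsub>RDirProd R S\<^esub> (c, d) = (a \<otimes>\<^bsub>R\<^esub> c, b \<otimes>\<^bsub>S\<^esub> d)"
  and RDirProd_add: "(a, b) \<oplus>\<^bsub>RDirProd R S\<^esub> (c, d) = (a \<oplus>\<^bsub>R\<^esub> c, b \<oplus>\<^bsub>S\<^esub> d)"
  by (simp_all add: RDirProd_def DirProd_def monoid.defs)

lemmas RDirProd_simps = RDirProd_carrier RDirProd_one RDirProd_zero RDirProd_mult RDirProd_add

lemma RDirProd_pow: "(a, b) [^]\<^bsub>RDirProd R S\<^esub> (n::nat) = (a [^]\<^bsub>R\<^esub> n, b [^]\<^bsub>S\<^esub> n)"
  by (induct n) (simp_all add: RDirProd_simps)

lemma RDirProd_a_inv: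
  assumes "ring R" and "ring S" and "a \<in> carrier R" and "b \<in> carrier S"
  shows "\<ominus>\<^bsub>RDirProd R S\<^esub> (a, b) = (\<ominus>\<^bsub>R\<^esub> a, \<ominus>\<^bsub>S\<^esub> b)"
proof -
  interpret R: ring R by fact
  interpret S: ring S by fact
  interpret ring "RDirProd R S"
    using RDirProd_ring assms(1,2) .
  show ?thesis
    using assms(3,4) by (intro minus_equality) (simp_all add: RDirProd_simps R.l_neg S.l_neg)
qed

lemma RDirProd_cring:
  assumes "cring R" and "cring S"
  shows "cring (RDirProd R S)"
proof -
  interpret R: cring R by fact
  interpret S: cring S by fact
  interpret ring "RDirProd R S"
    using RDirProd_ring R.ring_axioms S.ring_axioms .
  show ?thesis
  proof
    fix x y
    assume "x \<in> carrier (RDirProd R S)" and "y \<in> carrier (RDirProd R S)"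
    then show "x \<otimes>\<^bsub>RDirProd R S\<^esub> y = y \<otimes>\<^bsub>RDirProd R S\<^esub> x"
      by (cases x, cases y) (simp add: RDirProd_simps R.m_comm S.m_comm)
  qed
qed

lemma reduced_RDirProd:
  assumes "reduced R" and "reduced S"
  shows "reduced (RDirProd R S)"
proof -
  interpret R: reduced R by fact
  interpret S: reduced S by fact
  interpret record_cring "RDirProd R S"
    unfolding record_cring_def using RDirProd_cring[OF R.is_cring S.is_cring] .
  show ?thesis
  proof
    fix x and n :: nat
    assume x: "x \<in> carrier (RDirProd R S)" and "x [^]\<^bsub>RDirProd R S\<^esub> n = \<zero>\<^bsub>RDirProd R S\<^esub>"
    then obtain a b where x_ab: "x = (a, b)" and "a \<in> carrier R" "b \<in> carrier S"
      "a [^]\<^bsub>R\<^esub> n = \<zero>\<^bsub>R\<^esub>" "b [^]\<^bsub>S\<^esub> n = \<zero>\<^bsub>S\<^esub>"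
      by (cases x) (simp add: RDirProd_simps RDirProd_pow)
    then have "a = \<zero>\<^bsub>R\<^esub>" and "b = \<zero>\<^bsub>S\<^esub>"
      using R.nilpotent_imp_zero S.nilpotent_imp_zero by blast+
    then show "x = \<zero>\<^bsub>RDirProd R S\<^esub>"
      unfolding x_ab by (simp add: RDirProd_zero)
  qed
qed

lemma numc_RDirProd:
  assumes "reduced R" and "reduced S"
  shows "numc (RDirProd R S) n = (numc R n, numc S n)"
proof -
  interpret R: reduced R by fact
  interpret S: reduced S by fact
  interpret P: reduced "RDirProd R S"
    using reduced_RDirProd assms .
  show ?thesis
    by (induct n) (simp_all add: R.numc_Suc S.numc_Suc P.numc_Suc RDirProd_simps)
qed

lemma inv_rel_RDirProd:
  assumes "inv_rel R a b" and "inv_rel S c d"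
  shows "inv_rel (RDirProd R S) (a, c) (b, d)"
  using assms by (simp add: inv_rel_def RDirProd_mult)

lemma root_rel_RDirProd:
  assumes R: "reduced R" and S: "reduced S"
    and root_R: "root_rel p R a b" and root_S: "root_rel p S c d"
    and a: "a \<in> carrier R" and c: "c \<in> carrier S"
  shows "root_rel p (RDirProd R S) (a, c) (b, d)"
proof -
  interpret R: reduced R by fact
  interpret S: reduced S by fact
  obtain z1 where z1: "z1 \<in> carrier R" "inv_rel R (numc R p) z1"
    and b_pow: "b [^]\<^bsub>R\<^esub> p = (\<one>\<^bsub>R\<^esub> \<ominus>\<^bsub>R\<^esub> z1 \<otimes>\<^bsub>R\<^esub> numc R p) \<otimes>\<^bsub>R\<^esub> a"
    using root_R unfolding root_rel_def by blast
  obtain z2 where z2: "z2 \<in> carrier S" "inv_rel S (numc S p) z2"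
    and d_pow: "d [^]\<^bsub>S\<^esub> p = (\<one>\<^bsub>S\<^esub> \<ominus>\<^bsub>S\<^esub> z2 \<otimes>\<^bsub>S\<^esub> numc S p) \<otimes>\<^bsub>S\<^esub> c"
    using root_S unfolding root_rel_def by blast
  show ?thesis
    unfolding root_rel_def numc_RDirProd[OF R S]
  proof (intro bexI conjI)
    show "inv_rel (RDirProd R S) (numc R p, numc S p) (z1, z2)"
      using z1 z2 by (intro inv_rel_RDirProd)
    show "(b, d) [^]\<^bsub>RDirProd R S\<^esub> p = (\<one>\<^bsub>RDirProd R S\<^esub> \<ominus>\<^bsub>RDirProd R S\<^esub>
        (z1, z2) \<otimes>\<^bsub>RDirProd R S\<^esub> (numc R p, numc S p)) \<otimes>\<^bsub>RDirProd R S\<^esub> (a, c)"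
      using z1 z2 b_pow d_pow
      by (simp add: a_minus_def RDirProd_simps RDirProd_pow RDirProd_a_inv R.ring_axioms S.ring_axioms)
    show "(z1, z2) \<in> carrier (RDirProd R S)"
      using z1 z2 by (simp add: RDirProd_carrier)
  qed
qed

lemma (in reduced) reduced_image_ring:
  assumes inj: "inj_on f (carrier R)"
  shows "reduced (image_ring f R)" and "f \<in> ring_hom R (image_ring f R)"
proof -
  have iso: "f \<in> ring_iso R (image_ring f R)"
    by (rule inj_imp_image_ring_iso[OF inj])
  then show hom: "f \<in> ring_hom R (image_ring f R)"
    by (simp add: ring_iso_def)
  have "cring ((image_ring f R) \<lparr> zero := f \<zero> \<rparr>)"
    by (rule ring_iso_imp_img_cring[OF iso])
  then have "cring (image_ring f R)"
    by (simp add: image_ring_def image_group_def monoid.defs)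
  then interpret I: record_cring "image_ring f R"
    unfolding record_cring_def .
  have hom_ring: "ring_hom_ring R (image_ring f R) f"
    using hom by unfold_locales
  show "reduced (image_ring f R)"
  proof
    fix y and n :: nat
    assume "y \<in> carrier (image_ring f R)" and y_pow: "y [^]\<^bsub>image_ring f R\<^esub> n = \<zero>\<^bsub>image_ring f R\<^esub>"
    then obtain x where x: "x \<in> carrier R" and y: "y = f x"
      unfolding image_ring_carrier by blast
    have "f (x [^] n) = f \<zero>"
      using y_pow ring_hom_ring.hom_nat_pow[OF hom_ring x] unfolding y by (simp add: image_ring_zero)
    then have "x [^] n = \<zero>"
      using inj x by (auto dest: inj_onD)
    then have "x = \<zero>"
      using x nilpotent_imp_zero by blast
    then show "y = \<zero>\<^bsub>image_ring f R\<^esub>"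
      using y by (simp add: image_ring_zero)
  qed
qed

section \<open>Embedding a reduced ring with a distinguished element\<close>

locale reduced_localization = reduced +
  fixes s
  assumes s_closed [simp]: "s \<in> carrier R"
begin

lemma s_pow_closed: "s [^] (n::nat) \<in> carrier R"
  by simp

lemma s_pow_add: "s [^] (i + j) = s [^] (i::nat) \<otimes> s [^] (j::nat)"
  by (simp add: nat_pow_mult)

text \<open>The pair \<open>(a, n)\<close> stands for \<open>a / s\<^sup>n\<close> in \<open>R[1/s]\<close>. As \<open>R\<close> is reduced, \<open>s\<^sup>k t = 0\<close> already
  gives \<open>s t = 0\<close>, so a single factor \<open>s\<close> suffices in the usual equivalence of fractions.\<close>
definition frac_eq :: "'a \<times> nat \<Rightarrow> 'a \<times> nat \<Rightarrow> bool" where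
  "frac_eq x y \<longleftrightarrow> fst x \<in> carrier R \<and> fst y \<in> carrier R \<and>
     s \<otimes> (s [^] snd y \<otimes> fst x) = s \<otimes> (s [^] snd x \<otimes> fst y)"

lemma frac_eq_refl: "fst x \<in> carrier R \<Longrightarrow> frac_eq x x"
  by (simp add: frac_eq_def)

lemma frac_eq_sym: "frac_eq x y \<Longrightarrow> frac_eq y x"
  by (simp add: frac_eq_def)

lemma frac_eq_trans:
  assumes xy: "frac_eq x y" and yz: "frac_eq y z"
  shows "frac_eq x z"
proof -
  obtain a n b m c k where abc: "x = (a, n)" "y = (b, m)" "z = (c, k)"
    by (metis prod.exhaust)
  have a: "a \<in> carrier R" and b: "b \<in> carrier R" and c: "c \<in> carrier R"
    using xy yz abc by (auto simp: frac_eq_def)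
  have xy': "s \<otimes> (s [^] m \<otimes> a) = s \<otimes> (s [^] n \<otimes> b)"
    and yz': "s \<otimes> (s [^] k \<otimes> b) = s \<otimes> (s [^] m \<otimes> c)"
    using xy yz abc by (simp_all add: frac_eq_def)
  define d where "d = s [^] k \<otimes> a \<ominus> s [^] n \<otimes> c"
  have d: "d \<in> carrier R"
    unfolding d_def using a c by simp
  have "s [^] Suc m \<otimes> d = s [^] k \<otimes> (s \<otimes> (s [^] m \<otimes> a)) \<ominus> s [^] n \<otimes> (s \<otimes> (s [^] m \<otimes> c))"
    unfolding d_def nat_pow_Suc using a c s_closed s_pow_closed by algebra
  also have "\<dots> = s [^] k \<otimes> (s \<otimes> (s [^] n \<otimes> b)) \<ominus> s [^] n \<otimes> (s \<otimes> (s [^] k \<otimes> b))"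
    unfolding xy' yz'[symmetric] ..
  also have "\<dots> = \<zero>"
    using b s_closed s_pow_closed by algebra
  finally have "s \<otimes> d = \<zero>"
    using pow_mult_eq_zero_imp_mult_eq_zero[OF s_closed d] by blast
  moreover have "s \<otimes> (s [^] k \<otimes> a) = s \<otimes> d \<oplus> s \<otimes> (s [^] n \<otimes> c)"
    unfolding d_def using a c s_closed s_pow_closed by algebra
  ultimately show ?thesis
    using abc a c by (simp add: frac_eq_def)
qed

definition frac :: "'a \<times> nat \<Rightarrow> ('a \<times> nat) set" where
  "frac x = {y. frac_eq x y}"

definition frac_rep :: "('a \<times> nat) set \<Rightarrow> 'a \<times> nat" where
  "frac_rep X = (SOME x. x \<in> X)"

definition frac_add :: "'a \<times> nat \<Rightarrow> 'a \<times> nat \<Rightarrow> 'a \<times> nat" where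
  "frac_add x y = (s [^] snd y \<otimes> fst x \<oplus> s [^] snd x \<otimes> fst y, snd x + snd y)"

definition frac_mult :: "'a \<times> nat \<Rightarrow> 'a \<times> nat \<Rightarrow> 'a \<times> nat" where
  "frac_mult x y = (fst x \<otimes> fst y, snd x + snd y)"

definition Loc :: "('a \<times> nat) set ring" where
  "Loc = \<lparr>carrier = frac ` (carrier R \<times> UNIV),
          monoid.mult = (\<lambda>X Y. frac (frac_mult (frac_rep X) (frac_rep Y))),
          one = frac (\<one>, 0), zero = frac (\<zero>, 0),
          add = (\<lambda>X Y. frac (frac_add (frac_rep X) (frac_rep Y)))\<rparr>"

lemma Loc_carrier: "carrier Loc = frac ` (carrier R \<times> UNIV)"
  and Loc_one: "\<one>\<^bsub>Loc\<^esub> = frac (\<one>, 0)"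
  and Loc_zero: "\<zero>\<^bsub>Loc\<^esub> = frac (\<zero>, 0)"
  by (simp_all add: Loc_def)

lemma frac_self: "fst x \<in> carrier R \<Longrightarrow> x \<in> frac x"
  by (simp add: frac_def frac_eq_refl)

lemma frac_cong: "frac_eq x y \<Longrightarrow> frac x = frac y"
  unfolding frac_def using frac_eq_trans frac_eq_sym by blast

lemma frac_eq_iff:
  assumes "fst y \<in> carrier R"
  shows "frac x = frac y \<longleftrightarrow> frac_eq x y"
  using frac_self[OF assms] frac_cong[of x y] unfolding frac_def by blast

lemma frac_eq_frac_rep: "fst x \<in> carrier R \<Longrightarrow> frac_eq x (frac_rep (frac x))"
  unfolding frac_rep_def using someI[of "\<lambda>y. y \<in> frac x" x] frac_self[of x]
  by (simp add: frac_def)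

lemma frac_add_comm: "fst x \<in> carrier R \<Longrightarrow> fst y \<in> carrier R \<Longrightarrow> frac_add x y = frac_add y x"
  by (simp add: frac_add_def a_comm add.commute)

lemma frac_mult_comm: "fst x \<in> carrier R \<Longrightarrow> fst y \<in> carrier R \<Longrightarrow> frac_mult x y = frac_mult y x"
  by (simp add: frac_mult_def m_comm add.commute)

lemma frac_add_cong_left:
  assumes xx': "frac_eq x x'" and y: "fst y \<in> carrier R"
  shows "frac_eq (frac_add x y) (frac_add x' y)"
proof -
  obtain a n a' n' b m where abc: "x = (a, n)" "x' = (a', n')" "y = (b, m)"
    by (metis prod.exhaust)
  have a: "a \<in> carrier R" and a': "a' \<in> carrier R" and b: "b \<in> carrier R"
    using xx' y abc by (auto simp: frac_eq_def)
  have H: "s \<otimes> (s [^] n' \<otimes> a) = s \<otimes> (s [^] n \<otimes> a')"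
    using xx' abc by (simp add: frac_eq_def)
  have "s \<otimes> (s [^] (n' + m) \<otimes> (s [^] m \<otimes> a \<oplus> s [^] n \<otimes> b))
      = s [^] m \<otimes> s [^] m \<otimes> (s \<otimes> (s [^] n' \<otimes> a)) \<oplus> s \<otimes> s [^] n' \<otimes> s [^] m \<otimes> s [^] n \<otimes> b"
    unfolding s_pow_add using a b s_closed s_pow_closed by algebra
  also have "\<dots> = s [^] m \<otimes> s [^] m \<otimes> (s \<otimes> (s [^] n \<otimes> a')) \<oplus> s \<otimes> s [^] n' \<otimes> s [^] m \<otimes> s [^] n \<otimes> b"
    unfolding H ..
  also have "\<dots> = s \<otimes> (s [^] (n + m) \<otimes> (s [^] m \<otimes> a' \<oplus> s [^] n' \<otimes> b))"
    unfolding s_pow_add using a' b s_closed s_pow_closed by algebra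
  finally show ?thesis
    using abc a a' b by (simp add: frac_eq_def frac_add_def)
qed

lemma frac_mult_cong_left:
  assumes xx': "frac_eq x x'" and y: "fst y \<in> carrier R"
  shows "frac_eq (frac_mult x y) (frac_mult x' y)"
proof -
  obtain a n a' n' b m where abc: "x = (a, n)" "x' = (a', n')" "y = (b, m)"
    by (metis prod.exhaust)
  have a: "a \<in> carrier R" and a': "a' \<in> carrier R" and b: "b \<in> carrier R"
    using xx' y abc by (auto simp: frac_eq_def)
  have H: "s \<otimes> (s [^] n' \<otimes> a) = s \<otimes> (s [^] n \<otimes> a')"
    using xx' abc by (simp add: frac_eq_def)
  have "s \<otimes> (s [^] (n' + m) \<otimes> (a \<otimes> b)) = s [^] m \<otimes> b \<otimes> (s \<otimes> (s [^] n' \<otimes> a))"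
    unfolding s_pow_add using a b s_closed s_pow_closed by algebra
  also have "\<dots> = s [^] m \<otimes> b \<otimes> (s \<otimes> (s [^] n \<otimes> a'))"
    unfolding H ..
  also have "\<dots> = s \<otimes> (s [^] (n + m) \<otimes> (a' \<otimes> b))"
    unfolding s_pow_add using a' b s_closed s_pow_closed by algebra
  finally show ?thesis
    using abc a a' b by (simp add: frac_eq_def frac_mult_def)
qed

lemma frac_add_cong:
  assumes "frac_eq x x'" and "frac_eq y y'"
  shows "frac_eq (frac_add x y) (frac_add x' y')"
proof -
  have closed: "fst x' \<in> carrier R" "fst y \<in> carrier R" "fst y' \<in> carrier R"
    using assms by (auto simp: frac_eq_def)
  have "frac_eq (frac_add x y) (frac_add x' y)"
    using frac_add_cong_left[OF assms(1) closed(2)] .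
  moreover have "frac_eq (frac_add y x') (frac_add y' x')"
    using frac_add_cong_left[OF assms(2) closed(1)] .
  ultimately show ?thesis
    using closed frac_add_comm frac_eq_trans by metis
qed

lemma frac_mult_cong:
  assumes "frac_eq x x'" and "frac_eq y y'"
  shows "frac_eq (frac_mult x y) (frac_mult x' y')"
proof -
  have closed: "fst x' \<in> carrier R" "fst y \<in> carrier R" "fst y' \<in> carrier R"
    using assms by (auto simp: frac_eq_def)
  have "frac_eq (frac_mult x y) (frac_mult x' y)"
    using frac_mult_cong_left[OF assms(1) closed(2)] .
  moreover have "frac_eq (frac_mult y x') (frac_mult y' x')"
    using frac_mult_cong_left[OF assms(2) closed(1)] .
  ultimately show ?thesis
    using closed frac_mult_comm frac_eq_trans by metis
qed

lemma Loc_add: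
  assumes "a \<in> carrier R" and "b \<in> carrier R"
  shows "frac (a, n) \<oplus>\<^bsub>Loc\<^esub> frac (b, m) = frac (s [^] m \<otimes> a \<oplus> s [^] n \<otimes> b, n + m)"
proof -
  have "frac_eq (frac_add (frac_rep (frac (a, n))) (frac_rep (frac (b, m)))) (frac_add (a, n) (b, m))"
    using assms by (intro frac_add_cong frac_eq_sym[OF frac_eq_frac_rep]) simp_all
  then have "frac (frac_add (frac_rep (frac (a, n))) (frac_rep (frac (b, m)))) = frac (frac_add (a, n) (b, m))"
    by (rule frac_cong)
  then show ?thesis
    by (simp add: Loc_def frac_add_def)
qed

lemma Loc_mult:
  assumes "a \<in> carrier R" and "b \<in> carrier R"
  shows "frac (a, n) \<otimes>\<^bsub>Loc\<^esub> frac (b, m) = frac (a \<otimes> b, n + m)"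
proof -
  have "frac_eq (frac_mult (frac_rep (frac (a, n))) (frac_rep (frac (b, m)))) (frac_mult (a, n) (b, m))"
    using assms by (intro frac_mult_cong frac_eq_sym[OF frac_eq_frac_rep]) simp_all
  then have "frac (frac_mult (frac_rep (frac (a, n))) (frac_rep (frac (b, m)))) = frac (frac_mult (a, n) (b, m))"
    by (rule frac_cong)
  then show ?thesis
    by (simp add: Loc_def frac_mult_def)
qed

lemma frac_in_Loc: "a \<in> carrier R \<Longrightarrow> frac (a, n) \<in> carrier Loc"
  unfolding Loc_carrier by auto

lemma Loc_cases:
  assumes "X \<in> carrier Loc"
  obtains a n where "a \<in> carrier R" and "X = frac (a, n)"
  using assms unfolding Loc_carrier by auto

lemma Loc_add_assoc:
  assumes "a \<in> carrier R" "b \<in> carrier R" "c \<in> carrier R"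
  shows "frac (a, n) \<oplus>\<^bsub>Loc\<^esub> frac (b, m) \<oplus>\<^bsub>Loc\<^esub> frac (c, k)
    = frac (a, n) \<oplus>\<^bsub>Loc\<^esub> (frac (b, m) \<oplus>\<^bsub>Loc\<^esub> frac (c, k))"
proof -
  have "s [^] k \<otimes> (s [^] m \<otimes> a \<oplus> s [^] n \<otimes> b) \<oplus> s [^] (n + m) \<otimes> c
      = s [^] (m + k) \<otimes> a \<oplus> s [^] n \<otimes> (s [^] k \<otimes> b \<oplus> s [^] m \<otimes> c)"
    unfolding s_pow_add using assms s_closed s_pow_closed by algebra
  then show ?thesis
    using assms by (simp add: Loc_add add.assoc)
qed

lemma Loc_add_inverse:
  assumes "a \<in> carrier R"
  shows "frac (\<ominus> a, n) \<oplus>\<^bsub>Loc\<^esub> frac (a, n) = \<zero>\<^bsub>Loc\<^esub>"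
proof -
  have "s [^] n \<otimes> \<ominus> a \<oplus> s [^] n \<otimes> a = \<zero>"
    using assms s_pow_closed by algebra
  then show ?thesis
    unfolding Loc_zero using assms by (simp add: Loc_add frac_eq_iff frac_eq_def)
qed

lemma Loc_abelian_group: "abelian_group Loc"
proof (rule abelian_groupI)
  fix X Y
  assume "X \<in> carrier Loc" and "Y \<in> carrier Loc"
  then show "X \<oplus>\<^bsub>Loc\<^esub> Y \<in> carrier Loc"
    by (elim Loc_cases) (simp add: Loc_add frac_in_Loc)
  show "X \<oplus>\<^bsub>Loc\<^esub> Y = Y \<oplus>\<^bsub>Loc\<^esub> X"
    using \<open>X \<in> carrier Loc\<close> \<open>Y \<in> carrier Loc\<close>
    by (elim Loc_cases) (simp add: Loc_add a_comm add.commute)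
next
  show "\<zero>\<^bsub>Loc\<^esub> \<in> carrier Loc"
    unfolding Loc_zero by (simp add: frac_in_Loc)
next
  fix X Y Z
  assume "X \<in> carrier Loc" and "Y \<in> carrier Loc" and "Z \<in> carrier Loc"
  then show "X \<oplus>\<^bsub>Loc\<^esub> Y \<oplus>\<^bsub>Loc\<^esub> Z = X \<oplus>\<^bsub>Loc\<^esub> (Y \<oplus>\<^bsub>Loc\<^esub> Z)"
    by (elim Loc_cases) (simp add: Loc_add_assoc)
next
  fix X
  assume "X \<in> carrier Loc"
  then show "\<zero>\<^bsub>Loc\<^esub> \<oplus>\<^bsub>Loc\<^esub> X = X"
    by (elim Loc_cases) (simp add: Loc_add Loc_zero)
  from \<open>X \<in> carrier Loc\<close> show "\<exists>Y\<in>carrier Loc. Y \<oplus>\<^bsub>Loc\<^esub> X = \<zero>\<^bsub>Loc\<^esub>"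
    by (elim Loc_cases) (metis Loc_add_inverse a_inv_closed frac_in_Loc)
qed

lemma Loc_comm_monoid: "comm_monoid Loc"
proof (rule comm_monoidI)
  fix X Y
  assume "X \<in> carrier Loc" and "Y \<in> carrier Loc"
  then show "X \<otimes>\<^bsub>Loc\<^esub> Y \<in> carrier Loc"
    by (elim Loc_cases) (simp add: Loc_mult frac_in_Loc)
  show "X \<otimes>\<^bsub>Loc\<^esub> Y = Y \<otimes>\<^bsub>Loc\<^esub> X"
    using \<open>X \<in> carrier Loc\<close> \<open>Y \<in> carrier Loc\<close>
    by (elim Loc_cases) (simp add: Loc_mult m_comm add.commute)
next
  show "\<one>\<^bsub>Loc\<^esub> \<in> carrier Loc"
    unfolding Loc_one by (simp add: frac_in_Loc)
next
  fix X Y Z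
  assume "X \<in> carrier Loc" and "Y \<in> carrier Loc" and "Z \<in> carrier Loc"
  then show "X \<otimes>\<^bsub>Loc\<^esub> Y \<otimes>\<^bsub>Loc\<^esub> Z = X \<otimes>\<^bsub>Loc\<^esub> (Y \<otimes>\<^bsub>Loc\<^esub> Z)"
    by (elim Loc_cases) (simp add: Loc_mult m_assoc add.assoc)
next
  fix X
  assume "X \<in> carrier Loc"
  then show "\<one>\<^bsub>Loc\<^esub> \<otimes>\<^bsub>Loc\<^esub> X = X"
    by (elim Loc_cases) (simp add: Loc_mult Loc_one)
qed

lemma Loc_cring: "cring Loc"
proof (rule cringI[OF Loc_abelian_group Loc_comm_monoid])
  fix X Y Z
  assume "X \<in> carrier Loc" and "Y \<in> carrier Loc" and "Z \<in> carrier Loc"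
  then show "(X \<oplus>\<^bsub>Loc\<^esub> Y) \<otimes>\<^bsub>Loc\<^esub> Z = X \<otimes>\<^bsub>Loc\<^esub> Z \<oplus>\<^bsub>Loc\<^esub> Y \<otimes>\<^bsub>Loc\<^esub> Z"
  proof (elim Loc_cases)
    fix a n b m c k
    assume abc: "a \<in> carrier R" "b \<in> carrier R" "c \<in> carrier R"
      and XYZ: "X = frac (a, n)" "Y = frac (b, m)" "Z = frac (c, k)"
    have "s \<otimes> (s [^] (n + k + (m + k)) \<otimes> ((s [^] m \<otimes> a \<oplus> s [^] n \<otimes> b) \<otimes> c))
        = s \<otimes> (s [^] (n + m + k) \<otimes> (s [^] (m + k) \<otimes> (a \<otimes> c) \<oplus> s [^] (n + k) \<otimes> (b \<otimes> c)))"
      unfolding s_pow_add using abc s_closed s_pow_closed by algebra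
    then show ?thesis
      using abc unfolding XYZ by (simp add: Loc_add Loc_mult frac_eq_iff frac_eq_def)
  qed
qed

lemma Loc_pow: "a \<in> carrier R \<Longrightarrow> frac (a, n) [^]\<^bsub>Loc\<^esub> (k::nat) = frac (a [^] k, n * k)"
  by (induct k) (simp_all add: Loc_one Loc_mult add.commute)

lemma Loc_reduced: "reduced Loc"
  unfolding reduced_def record_cring_def reduced_axioms_def
proof (intro conjI Loc_cring allI impI)
  fix X and k :: nat
  assume "X \<in> carrier Loc" and X_pow: "X [^]\<^bsub>Loc\<^esub> k = \<zero>\<^bsub>Loc\<^esub>"
  then obtain a n where a: "a \<in> carrier R" and X: "X = frac (a, n)"
    by (elim Loc_cases)
  have "s \<otimes> a [^] k = \<zero>"
    using X_pow a unfolding X Loc_zero by (simp add: Loc_pow frac_eq_iff frac_eq_def)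
  then have "a [^] k \<otimes> s = \<zero>"
    using a by (simp add: m_comm)
  then have "s \<otimes> a = \<zero>"
    using pow_mult_eq_zero_imp_mult_eq_zero[OF a s_closed] a by (simp add: m_comm)
  then show "X = \<zero>\<^bsub>Loc\<^esub>"
    unfolding X Loc_zero using a by (simp add: frac_eq_iff frac_eq_def)
qed

definition to_Loc :: "'a \<Rightarrow> ('a \<times> nat) set" where
  "to_Loc a = frac (a, 0)"

lemma to_Loc_hom: "to_Loc \<in> ring_hom R Loc"
  by (rule ring_hom_memI) (simp_all add: to_Loc_def frac_in_Loc Loc_mult Loc_add Loc_one)

lemma to_Loc_eq_zero_iff: "a \<in> carrier R \<Longrightarrow> to_Loc a = \<zero>\<^bsub>Loc\<^esub> \<longleftrightarrow> s \<otimes> a = \<zero>"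
  unfolding to_Loc_def Loc_zero by (simp add: frac_eq_iff frac_eq_def)

lemma to_Loc_s_Units: "to_Loc s \<in> Units Loc"
proof -
  interpret Loc: cring Loc
    by (rule Loc_cring)
  have "to_Loc s \<otimes>\<^bsub>Loc\<^esub> frac (\<one>, 1) = \<one>\<^bsub>Loc\<^esub>"
    unfolding to_Loc_def Loc_one by (simp add: Loc_mult frac_eq_iff frac_eq_def)
  moreover have "to_Loc s \<in> carrier Loc" and "frac (\<one>, 1) \<in> carrier Loc"
    unfolding to_Loc_def by (simp_all add: frac_in_Loc)
  ultimately show ?thesis
    unfolding Units_def using Loc.m_comm by (auto intro!: bexI[of _ "frac (\<one>, 1)"])
qed

definition Ann_Ann :: "'a set" where
  "Ann_Ann = {a \<in> carrier R. \<forall>t\<in>carrier R. s \<otimes> t = \<zero> \<longrightarrow> a \<otimes> t = \<zero>}"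

lemma Ann_Ann_ideal: "ideal Ann_Ann R"
proof (rule idealI[OF ring_axioms])
  show "subgroup Ann_Ann (add_monoid R)"
  proof (rule add.subgroupI)
    show "Ann_Ann \<subseteq> carrier R" and "Ann_Ann \<noteq> {}"
      by (auto simp: Ann_Ann_def)
  next
    fix a
    assume "a \<in> Ann_Ann"
    then show "\<ominus> a \<in> Ann_Ann"
      by (auto simp: Ann_Ann_def l_minus)
  next
    fix a b
    assume "a \<in> Ann_Ann" and "b \<in> Ann_Ann"
    then show "a \<oplus> b \<in> Ann_Ann"
      by (auto simp: Ann_Ann_def l_distr)
  qed
next
  fix a x
  assume "a \<in> Ann_Ann" and "x \<in> carrier R"
  then show "x \<otimes> a \<in> Ann_Ann" and "a \<otimes> x \<in> Ann_Ann"
    by (auto simp: Ann_Ann_def m_assoc m_lcomm[of a x])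
qed

lemma s_in_Ann_Ann: "s \<in> Ann_Ann"
  by (simp add: Ann_Ann_def)

lemma pow_mem_Ann_Ann_imp_mem: "a \<in> carrier R \<Longrightarrow> a [^] (k::nat) \<in> Ann_Ann \<Longrightarrow> a \<in> Ann_Ann"
  unfolding Ann_Ann_def using pow_mult_eq_zero_imp_mult_eq_zero by auto

definition Q :: "'a set ring" where
  "Q = R Quot Ann_Ann"

lemma Q_cring: "cring Q"
  unfolding Q_def by (rule ideal.quotient_is_cring[OF Ann_Ann_ideal is_cring])

lemma Q_hom: "(\<lambda>a. Ann_Ann +> a) \<in> ring_hom R Q"
  unfolding Q_def using ideal.rcos_ring_hom[OF Ann_Ann_ideal] by simp

lemma Q_zero: "\<zero>\<^bsub>Q\<^esub> = Ann_Ann"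
  by (simp add: Q_def FactRing_def)

lemma Q_carrier: "carrier Q = (\<lambda>a. Ann_Ann +> a) ` carrier R"
  by (auto simp: Q_def FactRing_def A_RCOSETS_def')

lemma Ann_Ann_abelian_subgroup: "abelian_subgroup Ann_Ann R"
  by (rule abelian_subgroupI3[OF ideal.axioms(1)[OF Ann_Ann_ideal] is_abelian_group])

lemma Ann_Ann_subgroup: "subgroup Ann_Ann (add_monoid R)"
  using ideal.axioms(1)[OF Ann_Ann_ideal] by (simp add: additive_subgroup_def)

lemma rcos_eq_Ann_Ann_iff:
  assumes a: "a \<in> carrier R"
  shows "Ann_Ann +> a = Ann_Ann \<longleftrightarrow> a \<in> Ann_Ann"
proof
  assume "Ann_Ann +> a = Ann_Ann"
  then show "a \<in> Ann_Ann"
    using abelian_subgroup.a_rcos_self[OF Ann_Ann_abelian_subgroup a] by simp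
next
  assume "a \<in> Ann_Ann"
  then show "Ann_Ann +> a = Ann_Ann"
    by (rule a_rcos_zero[OF Ann_Ann_ideal])
qed

lemma Q_reduced: "reduced Q"
  unfolding reduced_def record_cring_def reduced_axioms_def
proof (intro conjI Q_cring allI impI)
  fix X and k :: nat
  assume "X \<in> carrier Q" and X_pow: "X [^]\<^bsub>Q\<^esub> k = \<zero>\<^bsub>Q\<^esub>"
  then obtain a where a: "a \<in> carrier R" and X: "X = Ann_Ann +> a"
    unfolding Q_carrier by blast
  have "Ann_Ann +> a [^] k = Ann_Ann"
    using X_pow ring_hom_ring.hom_nat_pow[OF ideal.rcos_ring_hom_ring[OF Ann_Ann_ideal] a]
    unfolding X Q_zero by (simp add: Q_def)
  then have "a \<in> Ann_Ann"
    using a pow_mem_Ann_Ann_imp_mem rcos_eq_Ann_Ann_iff by simp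
  then show "X = \<zero>\<^bsub>Q\<^esub>"
    unfolding X Q_zero using a rcos_eq_Ann_Ann_iff by simp
qed

abbreviation LQ :: "(('a \<times> nat) set \<times> 'a set) ring" where
  "LQ \<equiv> RDirProd Loc Q"

lemma LQ_reduced: "reduced LQ"
  using reduced_RDirProd[OF Loc_reduced Q_reduced] .

lemma pair_hom:
  assumes g: "g \<in> ring_hom R Q"
  shows "(\<lambda>a. (to_Loc a, g a)) \<in> ring_hom R LQ"
  using ring_hom_memE[OF to_Loc_hom] ring_hom_memE[OF g]
  by (intro ring_hom_memI) (simp_all add: RDirProd_simps)

lemma pair_inj:
  assumes g: "g \<in> ring_hom R Q" and ker: "\<And>a. a \<in> carrier R \<Longrightarrow> g a = \<zero>\<^bsub>Q\<^esub> \<Longrightarrow> a \<in> Ann_Ann"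
  shows "inj_on (\<lambda>a. (to_Loc a, g a)) (carrier R)"
proof -
  have "ring LQ"
    using LQ_reduced by (simp add: reduced_def record_cring_def cring.axioms(1))
  then have hom: "ring_hom_ring R LQ (\<lambda>a. (to_Loc a, g a))"
    using ring_hom_ringI2[OF ring_axioms _ pair_hom[OF g]] by blast
  have "a = \<zero>" if a: "a \<in> carrier R" and "(to_Loc a, g a) = \<zero>\<^bsub>LQ\<^esub>" for a
  proof -
    have "to_Loc a = \<zero>\<^bsub>Loc\<^esub>" and "g a = \<zero>\<^bsub>Q\<^esub>"
      using that(2) by (simp_all add: RDirProd_zero)
    then have "s \<otimes> a = \<zero>" and "a \<in> Ann_Ann"
      using a to_Loc_eq_zero_iff ker by simp_all
    then have "a \<otimes> a = \<zero>"
      using a by (simp add: Ann_Ann_def)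
    then show ?thesis
      using square_eq_zero_imp_zero[OF a] by simp
  qed
  then have "a_kernel R LQ (\<lambda>a. (to_Loc a, g a)) = {\<zero>}"
    using ring_hom_zero[OF pair_hom[OF g] ring_axioms \<open>ring LQ\<close>] unfolding a_kernel_def' by auto
  then show ?thesis
    by (rule ring_hom_ring.trivial_ker_imp_inj[OF hom])
qed

text \<open>\<open>Ext\<close> is a copy of \<open>LQ\<close> on the carrier type demanded by \<^const>\<open>extendable_RCR\<close>. At \<open>{}\<close>,
  a fraction is stored through its chosen representative \<open>(a, n)\<close> as \<open>n + 1\<close> copies of \<open>a\<close>;
  at every other set, a coset is stored through one of its members.\<close>
definition enc :: "('a \<times> nat) set \<times> 'a set \<Rightarrow> 'a set \<Rightarrow> 'a list" where
  "enc P = (\<lambda>S. if S = {} then (case frac_rep (fst P) of (a, n) \<Rightarrow> replicate (Suc n) a)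
                 else [SOME y. y \<in> snd P])"

lemma frac_frac_rep: "X \<in> carrier Loc \<Longrightarrow> frac (frac_rep X) = X"
  by (elim Loc_cases) (simp add: frac_cong[OF frac_eq_sym[OF frac_eq_frac_rep]])

lemma rcos_some_elem: "Y \<in> carrier Q \<Longrightarrow> Ann_Ann +> (SOME y. y \<in> Y) = Y"
proof -
  assume "Y \<in> carrier Q"
  then obtain b where b: "b \<in> carrier R" and Y: "Y = Ann_Ann +> b"
    unfolding Q_carrier by blast
  have "b \<in> Y"
    unfolding Y by (rule abelian_subgroup.a_rcos_self[OF Ann_Ann_abelian_subgroup b])
  then have "(SOME y. y \<in> Y) \<in> Ann_Ann +> b"
    unfolding Y by (rule someI)
  then show ?thesis
    unfolding Y using a_repr_independence[OF _ b Ann_Ann_subgroup] by simp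
qed

lemma enc_inj: "inj_on enc (carrier LQ)"
proof (rule inj_onI)
  fix P P'
  assume P: "P \<in> carrier LQ" and P': "P' \<in> carrier LQ" and eq: "enc P = enc P'"
  obtain X Y X' Y' where XY: "P = (X, Y)" "P' = (X', Y')"
    by (metis prod.exhaust)
  have closed: "X \<in> carrier Loc" "Y \<in> carrier Q" "X' \<in> carrier Loc" "Y' \<in> carrier Q"
    using P P' unfolding XY by (simp_all add: RDirProd_carrier)
  have "(case frac_rep X of (a, n) \<Rightarrow> replicate (Suc n) a) = (case frac_rep X' of (a, n) \<Rightarrow> replicate (Suc n) a)"
    using fun_cong[OF eq, of "{}"] unfolding enc_def XY by simp
  then have "frac_rep X = frac_rep X'"
    by (cases "frac_rep X", cases "frac_rep X'") simp
  then have "X = X'"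
    using frac_frac_rep[OF closed(1)] frac_frac_rep[OF closed(3)] by metis
  moreover have "(SOME y. y \<in> Y) = (SOME y. y \<in> Y')"
    using fun_cong[OF eq, of UNIV] unfolding enc_def XY by simp
  then have "Y = Y'"
    using rcos_some_elem[OF closed(2)] rcos_some_elem[OF closed(4)] by metis
  ultimately show "P = P'"
    unfolding XY by simp
qed

definition Ext :: "('a set \<Rightarrow> 'a list) ring" where
  "Ext = image_ring enc LQ"

lemma Ext_reduced: "reduced Ext"
  and enc_hom: "enc \<in> ring_hom LQ Ext"
  unfolding Ext_def using reduced.reduced_image_ring[OF LQ_reduced enc_inj] by simp_all

lemma enc_hom_ring: "ring_hom_ring LQ Ext enc"
  using LQ_reduced Ext_reduced enc_hom
  by (intro ring_hom_ringI2) (simp_all add: reduced_def record_cring_def cring.axioms(1))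

lemma embedding_into_Ext:
  assumes g: "g \<in> ring_hom R Q" and ker: "\<And>a. a \<in> carrier R \<Longrightarrow> g a = \<zero>\<^bsub>Q\<^esub> \<Longrightarrow> a \<in> Ann_Ann"
  shows "(\<lambda>a. enc (to_Loc a, g a)) \<in> ring_hom R Ext"
    and "inj_on (\<lambda>a. enc (to_Loc a, g a)) (carrier R)"
proof -
  show "(\<lambda>a. enc (to_Loc a, g a)) \<in> ring_hom R Ext"
    using ring_hom_trans[OF pair_hom[OF g] enc_hom] by (simp add: comp_def)
  have "(\<lambda>a. (to_Loc a, g a)) ` carrier R \<subseteq> carrier LQ"
    using ring_hom_memE(1)[OF pair_hom[OF g]] by auto
  then show "inj_on (\<lambda>a. enc (to_Loc a, g a)) (carrier R)"
    using comp_inj_on[OF pair_inj[OF g ker] inj_on_subset[OF enc_inj]] by (simp add: comp_def)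
qed

lemma extension_with_witness:
  fixes rel :: "('a set \<Rightarrow> 'a list) ring \<Rightarrow> ('a set \<Rightarrow> 'a list) \<Rightarrow> ('a set \<Rightarrow> 'a list) \<Rightarrow> bool"
  assumes g: "g \<in> ring_hom R Q" and ker: "\<And>a. a \<in> carrier R \<Longrightarrow> g a = \<zero>\<^bsub>Q\<^esub> \<Longrightarrow> a \<in> Ann_Ann"
    and y: "y \<in> carrier Ext" and rel: "rel Ext (enc (to_Loc x, g x)) y"
  shows "\<exists>(B :: ('a set \<Rightarrow> 'a list) ring) h. reduced_cring B \<and> h \<in> ring_hom R B \<and>
    inj_on h (carrier R) \<and> (\<exists>y\<in>carrier B. rel B (h x) y)"
proof (intro exI[of _ Ext] exI[of _ "\<lambda>a. enc (to_Loc a, g a)"] conjI)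
  show "reduced_cring Ext"
    using Ext_reduced reduced_cring_iff_reduced by blast
qed (use embedding_into_Ext[OF g ker] y rel in auto)

lemma rcos_eq_zero_imp_mem: "a \<in> carrier R \<Longrightarrow> Ann_Ann +> a = \<zero>\<^bsub>Q\<^esub> \<Longrightarrow> a \<in> Ann_Ann"
  using rcos_eq_Ann_Ann_iff by (simp add: Q_zero)

lemma numc_Q_eq_zero:
  assumes "s = numc R p"
  shows "numc Q p = \<zero>\<^bsub>Q\<^esub>"
proof -
  interpret Q: reduced Q
    by (rule Q_reduced)
  have "ring_hom_ring R Q (\<lambda>a. Ann_Ann +> a)"
    using Q_hom by (intro ring_hom_ringI2) (simp_all add: ring_axioms Q.ring_axioms)
  from hom_numc[OF this, of p] have "numc Q p = Ann_Ann +> s"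
    using assms by simp
  then show ?thesis
    using rcos_eq_Ann_Ann_iff[OF s_closed] s_in_Ann_Ann by (simp add: Q_zero)
qed

lemma frobenius_Q:
  assumes p: "prime p" and s: "s = numc R p"
  shows "(\<lambda>a. (Ann_Ann +> a) [^]\<^bsub>Q\<^esub> p) \<in> ring_hom R Q"
    and "\<And>a. a \<in> carrier R \<Longrightarrow> (Ann_Ann +> a) [^]\<^bsub>Q\<^esub> p = \<zero>\<^bsub>Q\<^esub> \<Longrightarrow> a \<in> Ann_Ann"
proof -
  interpret Q: reduced Q
    by (rule Q_reduced)
  show "(\<lambda>a. (Ann_Ann +> a) [^]\<^bsub>Q\<^esub> p) \<in> ring_hom R Q"
    using ring_hom_trans[OF Q_hom Q.frobenius_hom[OF p numc_Q_eq_zero[OF s]]] by (simp add: comp_def)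
  fix a
  assume a: "a \<in> carrier R" and "(Ann_Ann +> a) [^]\<^bsub>Q\<^esub> p = \<zero>\<^bsub>Q\<^esub>"
  then have "Ann_Ann +> a = \<zero>\<^bsub>Q\<^esub>"
    using ring_hom_memE(1)[OF Q_hom a] Q.nilpotent_imp_zero by blast
  then show "a \<in> Ann_Ann"
    using rcos_eq_zero_imp_mem[OF a] by blast
qed

lemma root_rel_to_Loc_zero:
  assumes p: "p > 0" and s: "s = numc R p" and x: "x \<in> carrier R"
  shows "root_rel p Loc (to_Loc x) \<zero>\<^bsub>Loc\<^esub>"
proof -
  interpret Loc: reduced Loc
    by (rule Loc_reduced)
  have "ring_hom_ring R Loc to_Loc"
    using to_Loc_hom by (intro ring_hom_ringI2) (simp_all add: ring_axioms Loc.ring_axioms)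
  from hom_numc[OF this, of p] have "numc Loc p = to_Loc s"
    using s by simp
  then have "numc Loc p \<in> Units Loc"
    using to_Loc_s_Units by simp
  then show ?thesis
    using Loc.root_rel_iff_pow_eq_zero ring_hom_memE(1)[OF to_Loc_hom x] p
    by (simp add: Loc.nat_pow_zero)
qed

end

section \<open>Extendability and the main theorem\<close>

lemma reduced_localizationI:
  "reduced_cring A \<Longrightarrow> s \<in> carrier A \<Longrightarrow> reduced_localization A s"
  by (simp add: reduced_localization_def reduced_localization_axioms_def reduced_cring_iff_reduced)

lemma extendable_RCR_inv_rel: "extendable_RCR inv_rel"
  unfolding extendable_RCR_def
proof (intro allI impI ballI)
  fix A :: "'a ring" and x
  assume "reduced_cring A" and x: "x \<in> carrier A"
  then interpret reduced_localization A x
    by (rule reduced_localizationI)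
  interpret Loc: reduced Loc
    by (rule Loc_reduced)
  interpret Q: reduced Q
    by (rule Q_reduced)
  let ?q = "\<lambda>a. Ann_Ann +>\<^bsub>A\<^esub> a"
  let ?y = "(inv\<^bsub>Loc\<^esub> (to_Loc x), \<zero>\<^bsub>Q\<^esub>)"
  have "?q x = \<zero>\<^bsub>Q\<^esub>"
    using x s_in_Ann_Ann rcos_eq_Ann_Ann_iff by (simp add: Q_zero)
  then have rel: "inv_rel LQ (to_Loc x, ?q x) ?y"
    using Loc.inv_rel_Units[OF to_Loc_s_Units] Q.inv_rel_zero_iff[OF Q.zero_closed]
    by (simp add: inv_rel_RDirProd)
  have x': "(to_Loc x, ?q x) \<in> carrier LQ" and y: "?y \<in> carrier LQ"
    using x to_Loc_s_Units ring_hom_memE(1)[OF to_Loc_hom] ring_hom_memE(1)[OF Q_hom]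
    by (simp_all add: RDirProd_carrier)
  show "\<exists>(B :: ('a set \<Rightarrow> 'a list) ring) h. reduced_cring B \<and> h \<in> ring_hom A B \<and>
      inj_on h (carrier A) \<and> (\<exists>y\<in>carrier B. inv_rel B (h x) y)"
    using Q_hom rcos_eq_zero_imp_mem ring_hom_memE(1)[OF enc_hom y]
      inv_rel_hom[OF enc_hom_ring x' y rel]
    by (rule extension_with_witness)
qed

lemma extendable_RCR_root_rel:
  assumes p: "prime p"
  shows "extendable_RCR (root_rel p)"
  unfolding extendable_RCR_def
proof (intro allI impI ballI)
  fix A :: "'a ring" and x
  assume "reduced_cring A" and x: "x \<in> carrier A"
  then interpret reduced_localization A "numc A p"
    by (intro reduced_localizationI) (simp_all add: reduced_cring_iff_reduced reduced_def record_cring.numc_closed)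
  interpret Q: reduced Q
    by (rule Q_reduced)
  let ?q = "\<lambda>a. Ann_Ann +>\<^bsub>A\<^esub> a"
  let ?g = "\<lambda>a. ?q a [^]\<^bsub>Q\<^esub> p"
  note g = frobenius_Q[OF p refl]
  have q_x: "?q x \<in> carrier Q" and g_x: "?g x \<in> carrier Q"
    using x ring_hom_memE(1)[OF Q_hom] ring_hom_memE(1)[OF g(1)] by simp_all
  have "root_rel p Q (?g x) (?q x)"
    using Q.root_rel_iff_pow_eq[OF numc_Q_eq_zero[OF refl] g_x q_x] by simp
  then have rel: "root_rel p LQ (to_Loc x, ?g x) (\<zero>\<^bsub>Loc\<^esub>, ?q x)"
    using root_rel_RDirProd[OF Loc_reduced Q_reduced root_rel_to_Loc_zero[OF prime_gt_0_nat[OF p] refl x]]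
      ring_hom_memE(1)[OF to_Loc_hom x] g_x by blast
  have x': "(to_Loc x, ?g x) \<in> carrier LQ" and y: "(\<zero>\<^bsub>Loc\<^esub>, ?q x) \<in> carrier LQ"
    using ring_hom_memE(1)[OF to_Loc_hom x] g_x q_x cring.cring_simprules(2)[OF Loc_cring]
    by (simp_all add: RDirProd_carrier)
  show "\<exists>(B :: ('a set \<Rightarrow> 'a list) ring) h. reduced_cring B \<and> h \<in> ring_hom A B \<and>
      inj_on h (carrier A) \<and> (\<exists>y\<in>carrier B. root_rel p B (h x) y)"
    using g ring_hom_memE(1)[OF enc_hom y] root_rel_hom[OF enc_hom_ring x' y rel]
    by (rule extension_with_witness)
qed

lemma functional_in_RCR_inv_rel: "functional_in_RCR inv_rel"
  unfolding functional_in_RCR_def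
proof (intro allI impI ballI)
  fix A :: "'a ring" and x y1 y2
  assume "reduced_cring A" and "x \<in> carrier A" "y1 \<in> carrier A" "y2 \<in> carrier A"
    and "inv_rel A x y1" "inv_rel A x y2"
  then interpret reduced A
    by (simp add: reduced_cring_iff_reduced)
  show "y1 = y2"
    by (rule inv_rel_unique) fact+
qed

lemma functional_in_RCR_root_rel:
  assumes "prime p"
  shows "functional_in_RCR (root_rel p)"
  unfolding functional_in_RCR_def
proof (intro allI impI ballI)
  fix A :: "'a ring" and x y1 y2
  assume "reduced_cring A" and "x \<in> carrier A" "y1 \<in> carrier A" "y2 \<in> carrier A"
    and "root_rel p A x y1" "root_rel p A x y2"
  then interpret reduced A
    by (simp add: reduced_cring_iff_reduced)
  show "y1 = y2"
    by (rule root_rel_unique[OF assms]) fact+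
qed

lemma ring_hom_ring_if_reduced_cring:
  "reduced_cring A \<Longrightarrow> reduced_cring B \<Longrightarrow> h \<in> ring_hom A B \<Longrightarrow> ring_hom_ring A B h"
  by (intro ring_hom_ringI2) (simp_all add: reduced_cring_def cring.axioms(1))

lemma preserved_by_homs_inv_rel: "preserved_by_homs inv_rel inv_rel"
  unfolding preserved_by_homs_def
  by (intro allI impI ballI) (rule inv_rel_hom[OF ring_hom_ring_if_reduced_cring])

lemma preserved_by_homs_root_rel: "preserved_by_homs (root_rel p) (root_rel p)"
  unfolding preserved_by_homs_def
  by (intro allI impI ballI) (rule root_rel_hom[OF ring_hom_ring_if_reduced_cring])

lemma weakly_rooted_field_imp_record_field: "weakly_rooted_field F \<Longrightarrow> record_field F"
  by (simp add: weakly_rooted_field_def record_field_def)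

theorem mainTheorem14:
  fixes p :: nat
  assumes "prime p"
  shows
   "(functional_in_RCR (inv_rel :: 'a ring \<Rightarrow> 'a \<Rightarrow> 'a \<Rightarrow> bool)
     \<and> preserved_by_homs (inv_rel :: 'a ring \<Rightarrow> _) (inv_rel :: 'b ring \<Rightarrow> _)
     \<and> extendable_RCR (inv_rel :: ('a set \<Rightarrow> 'a list) ring \<Rightarrow> _)
     \<and> (\<forall>F :: 'c ring. weakly_rooted_field F \<longrightarrow>
          (\<forall>a\<in>carrier F. \<forall>b\<in>carrier F. inv_rel F a b \<longleftrightarrow> b = weak_inv F a)))
    \<and>
    (functional_in_RCR (root_rel p :: 'a ring \<Rightarrow> 'a \<Rightarrow> 'a \<Rightarrow> bool)
     \<and> preserved_by_homs (root_rel p :: 'a ring \<Rightarrow> _) (root_rel p :: 'b ring \<Rightarrow> _)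
     \<and> extendable_RCR (root_rel p :: ('a set \<Rightarrow> 'a list) ring \<Rightarrow> _)
     \<and> (\<forall>F :: 'c ring. weakly_rooted_field F \<longrightarrow>
          (\<forall>a\<in>carrier F. \<forall>b\<in>carrier F. root_rel p F a b \<longleftrightarrow> b = weak_root p F a)))"
  using assms
  by (intro conjI allI impI ballI functional_in_RCR_inv_rel functional_in_RCR_root_rel
      preserved_by_homs_inv_rel preserved_by_homs_root_rel extendable_RCR_inv_rel extendable_RCR_root_rel
      record_field.inv_rel_iff_weak_inv record_field.root_rel_iff_weak_root
      weakly_rooted_field_imp_record_field)

end
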